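(* For every positive integer $n$, as formal power series in $z$, \[ \frac{(-tzq;q)_{n}}{(zq;q)_{n}} = 1+ \sum_{k \geq 1} z^k q^k \left( \overline{{ n+k-1 \brack k}}_{q,t} + t\, \overline{ { n+k-2 \brack k-1}}_{q,t} \right). \]
   Context: An overpartition is a partition in which the last occurrence of each distinct part size may be overlined; its weight $|\lambda|$ is the sum of its parts. For integers $0\le b\le a$, $\overline{{a \brack b}}_{q,t}=\sum_{\lambda} t^{\#_o(\lambda)} q^{|\lambda|}$, the sum over all overpartitions $\lambda$ with largest part at most $a-b$ and at most $b$ parts, $\#_o(\lambda)$ being the number of overlined parts. $(x;q)_k=\prod_{j=1}^k(1-xq^{j-1})$. *)

theory Defs
  imports "HOL-Library.Multiset" "HOL-Computational_Algebra.Formal_Power_Series"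
begin

text \<open>An overpartition is represented as a pair (P, Ov): P is the multiset of (positive)
  parts, O is the set of part sizes whose last occurrence is overlined (Ov \<subseteq> set of parts).\<close>

definition overpartitions_bounded :: "nat \<Rightarrow> nat \<Rightarrow> (nat multiset \<times> nat set) set" where
  "overpartitions_bounded m b =
     {(P, Ov). 0 \<notin># P \<and> (\<forall>x\<in>#P. x \<le> m) \<and> size P \<le> b \<and> Ov \<subseteq> set_mset P}"

definition over_gauss :: "nat \<Rightarrow> nat \<Rightarrow> 'a::comm_ring_1 \<Rightarrow> 'a \<Rightarrow> 'a" where
  "over_gauss a b q t =
     (\<Sum>(P, Ov)\<in>overpartitions_bounded (a - b) b. t ^ card Ov * q ^ sum_mset P)"

definition qpoch :: "'a::comm_ring_1 \<Rightarrow> 'a \<Rightarrow> nat \<Rightarrow> 'a" where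
  "qpoch x q k = (\<Prod>j<k. (1 - x * q ^ j))"

end

theory Submission
  imports Defs
begin

unbundle fps_syntax

text \<open>Write \<open>S(m, b)\<close> (\<open>overpartition_poly\<close>) for the generating polynomial of
  overpartitions with largest part at most \<open>m\<close> and at most \<open>b\<close> parts, so that the bracket
  \<open>[a; b]\<close> is \<open>S(a - b, b)\<close>. Classifying by the part \<open>m + 1\<close> gives
  \<open>S(m+1, b+1) = S(m, b+1) + q^(m+1) S(m+1, b) + t q^(m+1) S(m, b)\<close>, that is
  \<open>(1 - q^(m+2) z) G(m+1) = (1 + t q^(m+2) z) G(m)\<close> for \<open>G(m) = \<Sum>_b S(m, b) (qz)^b\<close>
  (\<open>overpartition_series\<close>), with \<open>G(0) = 1/(1 - qz)\<close>. Hence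
  \<open>G(m) (qz; q)_(m+1) = (-tq^2 z; q)_m\<close>, and the right-hand side of the theorem is
  \<open>(1 + tqz) G(n - 1)\<close>.\<close>

lemma finite_overpartitions_bounded: "finite (overpartitions_bounded m b)"
proof -
  let ?enc = "\<lambda>(xs, Ov). (mset xs, Ov)"
  have "overpartitions_bounded m b
          \<subseteq> ?enc ` ({xs. set xs \<subseteq> {..m} \<and> length xs \<le> b} \<times> Pow {..m})"
  proof
    fix x assume x: "x \<in> overpartitions_bounded m b"
    obtain P Ov where x_eq: "x = (P, Ov)" by (cases x)
    obtain xs where xs: "mset xs = P" using ex_mset by blast
    have "set xs \<subseteq> {..m}" "length xs \<le> b" "Ov \<subseteq> {..m}"
      using x xs by (auto simp: x_eq overpartitions_bounded_def)
    then show "x \<in> ?enc ` ({xs. set xs \<subseteq> {..m} \<and> length xs \<le> b} \<times> Pow {..m})"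
      using xs x_eq by force
  qed
  then show ?thesis
    by (rule finite_subset) (auto intro: finite_lists_length_le)
qed

lemma overpartitions_bounded_largest_0: "overpartitions_bounded 0 b = {({#}, {})}"
  by (auto simp: overpartitions_bounded_def) (metis multiset_nonemptyE)

lemma overpartitions_bounded_length_0: "overpartitions_bounded m 0 = {({#}, {})}"
  by (auto simp: overpartitions_bounded_def)

text \<open>Remove one copy of the largest part \<open>m + 1\<close>; when it was the only copy and was
  overlined, the overline goes with it (third set).\<close>

lemma overpartitions_bounded_Suc_Suc:
  "overpartitions_bounded (Suc m) (Suc b) =
     overpartitions_bounded m (Suc b)
     \<union> (\<lambda>(P, Ov). (add_mset (Suc m) P, Ov)) ` overpartitions_bounded (Suc m) b
     \<union> (\<lambda>(P, Ov). (add_mset (Suc m) P, insert (Suc m) Ov)) ` overpartitions_bounded m b"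
  (is "?L = ?A \<union> ?B \<union> ?C")
proof
  show "?A \<union> ?B \<union> ?C \<subseteq> ?L"
    by (auto simp: overpartitions_bounded_def) (meson le_SucI)
  show "?L \<subseteq> ?A \<union> ?B \<union> ?C"
  proof
    fix x assume x: "x \<in> ?L"
    obtain P Ov where x_eq: "x = (P, Ov)" by (cases x)
    have P: "0 \<notin># P" "\<forall>y\<in>#P. y \<le> Suc m" "size P \<le> Suc b" "Ov \<subseteq> set_mset P"
      using x by (auto simp: x_eq overpartitions_bounded_def)
    show "x \<in> ?A \<union> ?B \<union> ?C"
    proof (cases "Suc m \<in># P")
      case False
      then have "x \<in> ?A" using P by (force simp: x_eq overpartitions_bounded_def le_Suc_eq)
      then show ?thesis by blast
    next
      case True
      define P' where "P' = P - {#Suc m#}"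
      have P_eq: "P = add_mset (Suc m) P'" using True by (simp add: P'_def)
      show ?thesis
      proof (cases "Suc m \<in> Ov \<and> Suc m \<notin># P'")
        case True
        have "(P', Ov - {Suc m}) \<in> overpartitions_bounded m b"
          using P True P_eq by (force simp: overpartitions_bounded_def le_Suc_eq)
        moreover have "x = (add_mset (Suc m) P', insert (Suc m) (Ov - {Suc m}))"
          using True P_eq x_eq by auto
        ultimately show ?thesis by force
      next
        case False
        have "(P', Ov) \<in> overpartitions_bounded (Suc m) b"
          using P False P_eq by (force simp: overpartitions_bounded_def)
        then show ?thesis using P_eq x_eq by force
      qed
    qed
  qed
qed

definition overpartition_poly :: "nat \<Rightarrow> nat \<Rightarrow> 'a::comm_ring_1 \<Rightarrow> 'a \<Rightarrow> 'a" where
  "overpartition_poly m b q t =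
     (\<Sum>(P, Ov)\<in>overpartitions_bounded m b. t ^ card Ov * q ^ sum_mset P)"

lemma over_gauss_eq_overpartition_poly: "over_gauss a b q t = overpartition_poly (a - b) b q t"
  by (simp add: over_gauss_def overpartition_poly_def)

lemma overpartition_poly_largest_0 [simp]: "overpartition_poly 0 b q t = 1"
  by (simp add: overpartition_poly_def overpartitions_bounded_largest_0)

lemma overpartition_poly_length_0 [simp]: "overpartition_poly m 0 q t = 1"
  by (simp add: overpartition_poly_def overpartitions_bounded_length_0)

lemma overpartition_poly_Suc_Suc:
  "overpartition_poly (Suc m) (Suc b) q t =
     overpartition_poly m (Suc b) q t + q ^ Suc m * overpartition_poly (Suc m) b q t
     + t * q ^ Suc m * overpartition_poly m b q t"
proof -
  let ?w = "\<lambda>(P, Ov). t ^ card Ov * q ^ sum_mset P"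
  let ?A = "overpartitions_bounded m (Suc b)"
  let ?f = "\<lambda>(P, Ov). (add_mset (Suc m) P, Ov)"
  let ?g = "\<lambda>(P, Ov). (add_mset (Suc m) P, insert (Suc m) Ov)"
  let ?B = "?f ` overpartitions_bounded (Suc m) b"
  let ?C = "?g ` overpartitions_bounded m b"
  have fresh: "Suc m \<notin> Ov" "finite Ov" if "(P, Ov) \<in> overpartitions_bounded m b" for P Ov
    using that finite_subset[of Ov "set_mset P"]
    by (auto simp: overpartitions_bounded_def subset_iff) (metis Suc_n_not_le_n)
  have inj_f: "inj_on ?f (overpartitions_bounded (Suc m) b)"
    by (auto simp: inj_on_def)
  have inj_g: "inj_on ?g (overpartitions_bounded m b)"
    by (auto simp: inj_on_def dest!: fresh(1) simp: insert_ident)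
  have sum_B: "sum ?w ?B = q ^ Suc m * overpartition_poly (Suc m) b q t"
    unfolding sum.reindex[OF inj_f] overpartition_poly_def sum_distrib_left
    by (rule sum.cong) (auto simp: power_add)
  have sum_C: "sum ?w ?C = t * q ^ Suc m * overpartition_poly m b q t"
    unfolding sum.reindex[OF inj_g] overpartition_poly_def sum_distrib_left
    by (rule sum.cong) (auto simp: power_add mult_ac fresh)
  have "?A \<inter> ?B = {}" "(?A \<union> ?B) \<inter> ?C = {}"
    by (auto simp: overpartitions_bounded_def) (metis Suc_n_not_le_n)
  then have "overpartition_poly (Suc m) (Suc b) q t = sum ?w ?A + sum ?w ?B + sum ?w ?C"
    unfolding overpartition_poly_def overpartitions_bounded_Suc_Suc
    by (simp add: sum.union_disjoint finite_overpartitions_bounded)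
  then show ?thesis
    using sum_B sum_C by (simp add: overpartition_poly_def)
qed

lemma fps_nth_one_plus_const_X_mult:
  "((1 + fps_const c * fps_X) * (F :: 'a::comm_ring_1 fps)) $ n
     = F $ n + (if n = 0 then 0 else c * F $ (n - 1))"
proof -
  have "(1 + fps_const c * fps_X) * F = F + fps_const c * (fps_X * F)"
    by (simp add: algebra_simps)
  then show ?thesis by simp
qed

lemma fps_nth_one_minus_const_X_mult:
  "((1 - fps_const c * fps_X) * (F :: 'a::comm_ring_1 fps)) $ n
     = F $ n - (if n = 0 then 0 else c * F $ (n - 1))"
proof -
  have "(1 - fps_const c * fps_X) * F = F - fps_const c * (fps_X * F)"
    by (simp add: algebra_simps)
  then show ?thesis by simp
qed

lemma qpoch_0 [simp]: "qpoch x q 0 = 1"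
  by (simp add: qpoch_def)

lemma qpoch_Suc: "qpoch x q (Suc k) = qpoch x q k * (1 - x * q ^ k)"
  by (simp add: qpoch_def)

lemma qpoch_Suc_shift: "qpoch x q (Suc k) = (1 - x) * qpoch (x * q) q k"
  by (induction k) (simp_all add: qpoch_def mult_ac)

lemma fps_const_X_mult_const_power:
  "fps_const a * fps_X * fps_const q ^ j = fps_const (a * q ^ j) * (fps_X :: 'a::comm_ring_1 fps)"
  by (simp add: fps_const_mult[symmetric] mult_ac del: fps_const_mult)

lemma qpoch_const_X_Suc:
  "qpoch (fps_const a * fps_X) (fps_const q) (Suc k)
     = qpoch (fps_const a * fps_X) (fps_const q) k * (1 - fps_const (a * q ^ k) * fps_X)"
  by (simp only: qpoch_Suc fps_const_X_mult_const_power)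

lemma qpoch_neg_const_X_Suc:
  "qpoch (- (fps_const a * fps_X)) (fps_const q) (Suc k)
     = qpoch (- (fps_const a * fps_X)) (fps_const q) k * (1 + fps_const (a * q ^ k) * fps_X)"
  by (simp add: qpoch_Suc fps_const_X_mult_const_power del: fps_const_power)

lemma qpoch_const_X_nonzero: "qpoch (fps_const a * fps_X) (fps_const q) n \<noteq> (0 :: 'a::idom fps)"
proof -
  have "(1 - fps_const (a * q ^ j) * fps_X) $ 0 = (1 :: 'a)" for j
    by simp
  then have "1 - fps_const (a * q ^ j) * fps_X \<noteq> (0 :: 'a fps)" for j
    by (metis fps_zero_nth zero_neq_one)
  then show ?thesis
    by (induction n) (simp_all add: qpoch_const_X_Suc)
qed

definition overpartition_series :: "'a::comm_ring_1 \<Rightarrow> 'a \<Rightarrow> nat \<Rightarrow> 'a fps" where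
  "overpartition_series q t m = Abs_fps (\<lambda>b. q ^ b * overpartition_poly m b q t)"

lemma overpartition_series_0: "(1 - fps_const q * fps_X) * overpartition_series q t 0 = 1"
proof (rule fps_ext)
  fix b
  show "((1 - fps_const q * fps_X) * overpartition_series q t 0) $ b = (1 :: 'a fps) $ b"
    by (cases b) (simp_all add: fps_nth_one_minus_const_X_mult overpartition_series_def)
qed

lemma overpartition_series_Suc:
  "(1 - fps_const (q ^ (m + 2)) * fps_X) * overpartition_series q t (Suc m)
     = (1 + fps_const (t * q ^ (m + 2)) * fps_X) * overpartition_series q t m"
proof (rule fps_ext)
  fix b
  show "((1 - fps_const (q ^ (m + 2)) * fps_X) * overpartition_series q t (Suc m)) $ b
          = ((1 + fps_const (t * q ^ (m + 2)) * fps_X) * overpartition_series q t m) $ b"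
    by (cases b)
      (simp_all add: fps_nth_one_minus_const_X_mult fps_nth_one_plus_const_X_mult
        overpartition_series_def overpartition_poly_Suc_Suc algebra_simps)
qed

lemma overpartition_series_qpoch:
  "overpartition_series q t m * qpoch (fps_const q * fps_X) (fps_const q) (Suc m)
     = qpoch (- (fps_const (t * q ^ 2) * fps_X)) (fps_const q) m"
proof (induction m)
  case 0
  show ?case
    using overpartition_series_0[of q t] by (simp add: qpoch_def mult.commute)
next
  case (Suc m)
  have D_Suc: "qpoch (fps_const q * fps_X) (fps_const q) (Suc (Suc m))
      = qpoch (fps_const q * fps_X) (fps_const q) (Suc m) * (1 - fps_const (q ^ (m + 2)) * fps_X)"
    by (simp add: qpoch_const_X_Suc[of _ _ "Suc m"])
  have "t * q ^ 2 * q ^ m = t * q ^ (m + 2)"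
    by (simp add: power_add power2_eq_square mult_ac)
  then have N_Suc: "qpoch (- (fps_const (t * q ^ 2) * fps_X)) (fps_const q) (Suc m)
      = qpoch (- (fps_const (t * q ^ 2) * fps_X)) (fps_const q) m * (1 + fps_const (t * q ^ (m + 2)) * fps_X)"
    by (simp only: qpoch_neg_const_X_Suc)
  have "overpartition_series q t (Suc m) * qpoch (fps_const q * fps_X) (fps_const q) (Suc (Suc m))
      = (1 - fps_const (q ^ (m + 2)) * fps_X) * overpartition_series q t (Suc m)
          * qpoch (fps_const q * fps_X) (fps_const q) (Suc m)"
    unfolding D_Suc by (simp only: mult_ac)
  also have "\<dots> = (1 + fps_const (t * q ^ (m + 2)) * fps_X)
      * (overpartition_series q t m * qpoch (fps_const q * fps_X) (fps_const q) (Suc m))"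
    by (simp only: overpartition_series_Suc mult.assoc)
  also have "\<dots> = qpoch (- (fps_const (t * q ^ 2) * fps_X)) (fps_const q) (Suc m)"
    unfolding Suc.IH N_Suc by (rule mult.commute)
  finally show ?case .
qed

theorem theorem3p2:
  fixes q t :: "'a::field" and n :: nat
  assumes "n \<ge> 1"
  shows "qpoch (- (fps_const (t * q) * fps_X)) (fps_const q) n
           / qpoch (fps_const q * fps_X) (fps_const q) n
         = Abs_fps (\<lambda>k. if k = 0 then 1
              else q ^ k * (over_gauss (n + k - 1) k q t + t * over_gauss (n + k - 2) (k - 1) q t))"
    (is "?N / ?D = ?R")
proof -
  obtain m where n: "n = Suc m" using assms by (cases n) auto
  have "?R = (1 + fps_const (t * q) * fps_X) * overpartition_series q t m"
  proof (rule fps_ext)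
    fix k
    have "n + k - 1 - k = m" "n + k - 2 - (k - 1) = m" if "k > 0"
      using n that by auto
    then show "?R $ k = ((1 + fps_const (t * q) * fps_X) * overpartition_series q t m) $ k"
      by (cases k) (simp_all add: fps_nth_one_plus_const_X_mult overpartition_series_def
          over_gauss_eq_overpartition_poly algebra_simps)
  qed
  also have "\<dots> * ?D = (1 + fps_const (t * q) * fps_X)
      * qpoch (- (fps_const (t * q ^ 2) * fps_X)) (fps_const q) m"
    by (simp only: n overpartition_series_qpoch mult.assoc)
  also have "\<dots> = ?N"
  proof -
    have "- (fps_const (t * q) * fps_X) * fps_const q = - (fps_const (t * q ^ 2) * fps_X)"
      using fps_const_X_mult_const_power[of "t * q" q 1] by (simp add: power2_eq_square mult.assoc)
    then show ?thesis by (simp only: n qpoch_Suc_shift diff_minus_eq_add)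
  qed
  finally have "?N = ?R * ?D" ..
  then show ?thesis
    by (simp only: fps_divide_times_eq[OF qpoch_const_X_nonzero])
qed

end
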